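(* Let $T=(V,E)$ be a rooted phylogenetic tree on a finite set $\mathcal{X}$ of taxa, let $\mathcal{G}$ be a finite set of genes, let $G:\mathcal{X}\to 2^{\mathcal{G}}$ be a genome assignment, and let $k$ be a positive integer. Then: (i) $\ell(T,G,k)\ge \sqrt{\tfrac{2}{3}\,|\{v\in V : n(v)>k\}|}$; (ii) $\ell(T,G,k)\le \left\lceil \frac{|\mathcal{G}|-k}{k}\right\rceil\cdot(|\mathcal{X}|+1)$.
   Context: A digraph is rooted if it has a vertex $\rho$ of indegree zero such that every vertex is reachable from $\rho$ by a directed path. A phylogenetic tree on $\mathcal{X}$ is a rooted tree (arcs directed away from the root) whose root has degree at least two, all other internal vertices have degree at least three, and whose leaf set is $\mathcal{X}$. A phylogenetic network on $\mathcal{X}$ is a rooted acyclic digraph whose root has outdegree at least two, in which every vertex $v$ of outdegree $1$ has indegree at least $2$, and whose set of outdegree-zero vertices (leaves) is $\mathcal{X}$. A genome assignment is any map $G:\mathcal{X}\to 2^{\mathcal{G}}$. For a phylogenetic network $N=(V,A)$ on $\mathcal{X}$ and positive integer $k$, a $(G,k)$-gene labelling of $N$ is a map $F:V\to 2^{\mathcal{G}}$ such that (I) $F(x)=G(x)$ for all $x\in\mathcal{X}$; (II) $|F(v)|\le k$ for all $v\in V$; (III) for each $g\in\mathcal{G}$, the sub-digraph of $N$ induced by $\{v\in V: g\in F(v)\}$ is rooted. A network $N$ is obtained from $T$ by adding $h$ arcs if $N$ has a subgraph $T'$ that is a subdivision of $T$ (obtained by replacing arcs by directed paths) and exactly $h$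 arcs of $N$ are not arcs of $T'$. $\ell(T,G,k)$ denotes the minimum $h$ such that some phylogenetic network obtained from $T$ by adding $h$ arcs admits a $(G,k)$-gene labelling. For a vertex $v$ of $T$, $n(v)$ is the number of genes $g\in\mathcal{G}$ for which there exist leaves $x_1,x_2\in\mathcal{X}$ with $g\in G(x_1)\cap G(x_2)$ and whose most recent common ancestor in $T$ is $v$. *)

theory Defs
  imports Complex_Main "HOL-Library.Extended_Real"
begin

definition indeg :: "'a set \<Rightarrow> ('a \<times> 'a) set \<Rightarrow> 'a \<Rightarrow> nat" where
  "indeg V A v = card {u \<in> V. (u, v) \<in> A}"

definition outdeg :: "'a set \<Rightarrow> ('a \<times> 'a) set \<Rightarrow> 'a \<Rightarrow> nat" where
  "outdeg V A v = card {w \<in> V. (v, w) \<in> A}"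

definition digraph :: "'a set \<Rightarrow> ('a \<times> 'a) set \<Rightarrow> bool" where
  "digraph V A \<longleftrightarrow> finite V \<and> A \<subseteq> V \<times> V"

definition is_root :: "'a set \<Rightarrow> ('a \<times> 'a) set \<Rightarrow> 'a \<Rightarrow> bool" where
  "is_root V A \<rho> \<longleftrightarrow> \<rho> \<in> V \<and> indeg V A \<rho> = 0 \<and> (\<forall>v\<in>V. (\<rho>, v) \<in> (A \<inter> V \<times> V)\<^sup>*)"

definition rooted :: "'a set \<Rightarrow> ('a \<times> 'a) set \<Rightarrow> bool" where
  "rooted V A \<longleftrightarrow> (\<exists>\<rho>. is_root V A \<rho>)"

definition induced_rooted :: "('a \<times> 'a) set \<Rightarrow> 'a set \<Rightarrow> bool" where
  "induced_rooted A S \<longleftrightarrow> rooted S (A \<inter> S \<times> S)"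

definition phylo_tree :: "'a set \<Rightarrow> 'a set \<Rightarrow> ('a \<times> 'a) set \<Rightarrow> bool" where
  "phylo_tree X V A \<longleftrightarrow> digraph V A \<and>
     (\<exists>\<rho>. is_root V A \<rho> \<and>
        (\<forall>v\<in>V - {\<rho>}. indeg V A v = 1) \<and>
        outdeg V A \<rho> \<ge> 2 \<and>
        (\<forall>v\<in>V - {\<rho>}. outdeg V A v \<noteq> 0 \<longrightarrow> indeg V A v + outdeg V A v \<ge> 3)) \<and>
     {v \<in> V. outdeg V A v = 0} = X"

definition phylo_network :: "'a set \<Rightarrow> 'a set \<Rightarrow> ('a \<times> 'a) set \<Rightarrow> bool" where
  "phylo_network X V A \<longleftrightarrow> digraph V A \<and> acyclic A \<and>
     (\<exists>\<rho>. is_root V A \<rho> \<and> outdeg V A \<rho> \<ge> 2) \<and>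
     (\<forall>v\<in>V. outdeg V A v = 1 \<longrightarrow> indeg V A v \<ge> 2) \<and>
     {v \<in> V. outdeg V A v = 0} = X"

definition interior :: "'b list \<Rightarrow> 'b list" where
  "interior p = butlast (tl p)"

definition path_arcs :: "'b list \<Rightarrow> ('b \<times> 'b) set" where
  "path_arcs p = set (zip p (tl p))"

text \<open>(V',A') is a subdivision of (V,A): vertex v of the original corresponds to
  phi v, and each arc e = (u,v) is replaced by the directed path P e from phi u to phi v;
  the paths are internally vertex-disjoint and their interior vertices are new.\<close>
definition subdivision ::
  "'a set \<Rightarrow> ('a \<times> 'a) set \<Rightarrow> 'b set \<Rightarrow> ('b \<times> 'b) set \<Rightarrow> ('a \<Rightarrow> 'b) \<Rightarrow> ('a \<times> 'a \<Rightarrow> 'b list) \<Rightarrow> bool"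
  where
  "subdivision V A V' A' \<phi> P \<longleftrightarrow>
     inj_on \<phi> V \<and>
     (\<forall>e\<in>A. length (P e) \<ge> 2 \<and> hd (P e) = \<phi> (fst e) \<and> last (P e) = \<phi> (snd e) \<and>
             distinct (P e) \<and> set (interior (P e)) \<inter> \<phi> ` V = {}) \<and>
     (\<forall>e1\<in>A. \<forall>e2\<in>A. e1 \<noteq> e2 \<longrightarrow> set (interior (P e1)) \<inter> set (interior (P e2)) = {}) \<and>
     V' = \<phi> ` V \<union> (\<Union>e\<in>A. set (P e)) \<and>
     A' = (\<Union>e\<in>A. path_arcs (P e))"

text \<open>Network vertices have type 'a + nat, the
  network's leaf x being Inl x.\<close>
definition obtained_by_adding ::
  "'a set \<Rightarrow> 'a set \<Rightarrow> ('a \<times> 'a) set \<Rightarrow> ('a + nat) set \<Rightarrow> (('a + nat) \<times> ('a + nat)) set \<Rightarrow> nat \<Rightarrow> bool"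
  where
  "obtained_by_adding X V A VN AN h \<longleftrightarrow>
     (\<exists>VT AT \<phi> P. VT \<subseteq> VN \<and> AT \<subseteq> AN \<and> subdivision V A VT AT \<phi> P \<and>
        (\<forall>x\<in>X. \<phi> x = Inl x) \<and> card (AN - AT) = h)"

definition gene_labelling ::
  "'x set \<Rightarrow> 'g set \<Rightarrow> ('x \<Rightarrow> 'g set) \<Rightarrow> nat \<Rightarrow> ('x + nat) set \<Rightarrow> (('x + nat) \<times> ('x + nat)) set
     \<Rightarrow> (('x + nat) \<Rightarrow> 'g set) \<Rightarrow> bool" where
  "gene_labelling X Gs G k VN AN F \<longleftrightarrow>
     (\<forall>x\<in>X. F (Inl x) = G x) \<and>
     (\<forall>v\<in>VN. F v \<subseteq> Gs \<and> card (F v) \<le> k) \<and>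
     (\<forall>g\<in>Gs. induced_rooted AN {v \<in> VN. g \<in> F v})"

text \<open>ell(T,G,k) as an extended natural (infinity if no such network exists).\<close>
definition ell :: "'a set \<Rightarrow> 'a set \<Rightarrow> ('a \<times> 'a) set \<Rightarrow> 'g set \<Rightarrow> ('a \<Rightarrow> 'g set) \<Rightarrow> nat \<Rightarrow> enat" where
  "ell X V A Gs G k = Inf {enat h | h. \<exists>VN AN. phylo_network (Inl ` X) VN AN \<and>
       obtained_by_adding X V A VN AN h \<and> (\<exists>F. gene_labelling X Gs G k VN AN F)}"

definition is_mrca :: "'a set \<Rightarrow> ('a \<times> 'a) set \<Rightarrow> 'a \<Rightarrow> 'a \<Rightarrow> 'a \<Rightarrow> bool" where
  "is_mrca V A v x1 x2 \<longleftrightarrow> v \<in> V \<and> (v, x1) \<in> A\<^sup>* \<and> (v, x2) \<in> A\<^sup>* \<and>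
     (\<forall>w\<in>V. (w, x1) \<in> A\<^sup>* \<and> (w, x2) \<in> A\<^sup>* \<longrightarrow> (w, v) \<in> A\<^sup>*)"

definition nval :: "'a set \<Rightarrow> ('a \<times> 'a) set \<Rightarrow> 'a set \<Rightarrow> 'g set \<Rightarrow> ('a \<Rightarrow> 'g set) \<Rightarrow> 'a \<Rightarrow> nat" where
  "nval V A X Gs G v = card {g \<in> Gs. \<exists>x1\<in>X. \<exists>x2\<in>X. g \<in> G x1 \<inter> G x2 \<and> is_mrca V A v x1 x2}"

end

theory Submission
  imports Defs
begin

(* Upper bound.  Split the genes into m+1 blocks of at most k genes each, where
   m = ceil((|Gs| - k)/k).  Block 0 labels every internal tree vertex; for each further
   block add one new vertex below the root, joined to every leaf.  This network is
   obtained from T by adding m (|X| + 1) arcs and carries a (G,k)-gene labelling.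

   Lower bound.  Take an optimal network with h added arcs; it contains a subdivision of
   T, and every subdivision vertex projects onto a tree vertex.  If n(v) > k, some gene g
   shared by leaves x1, x2 with lowest common ancestor v is missing at v.  Following the
   g-labelled paths from the root of the g-subgraph to x1 and x2 shows that v is the
   lowest common ancestor of the projections of two endpoints of added arcs: two heads,
   or a tail and a head.  Hence at most C(h,2) + h^2 <= 3h^2/2 vertices satisfy n(v) > k. *)

locale rooted_phylo_tree =
  fixes X V :: "'a set" and A :: "('a \<times> 'a) set" and \<rho> :: 'a
  assumes finite_V: "finite V" and arcs_V: "A \<subseteq> V \<times> V" and root_V: "\<rho> \<in> V"
    and root_no_parent: "\<And>u. (u, \<rho>) \<notin> A"
    and root_reach: "\<And>v. v \<in> V \<Longrightarrow> (\<rho>, v) \<in> A\<^sup>*"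
    and indeg_one: "\<And>v. v \<in> V - {\<rho>} \<Longrightarrow> indeg V A v = 1"
    and root_outdeg: "outdeg V A \<rho> \<ge> 2"
    and inner_outdeg: "\<And>v. v \<in> V - {\<rho>} \<Longrightarrow> outdeg V A v \<noteq> 0 \<Longrightarrow> outdeg V A v \<ge> 2"
    and leaves_X: "{v \<in> V. outdeg V A v = 0} = X"

lemma phylo_tree_rooted:
  assumes "phylo_tree X V A"
  obtains \<rho> where "rooted_phylo_tree X V A \<rho>"
proof -
  from assms obtain \<rho> where dg: "digraph V A" and rt: "is_root V A \<rho>"
    and i1: "\<forall>v\<in>V - {\<rho>}. indeg V A v = 1" and o2: "outdeg V A \<rho> \<ge> 2"
    and o3: "\<forall>v\<in>V - {\<rho>}. outdeg V A v \<noteq> 0 \<longrightarrow> indeg V A v + outdeg V A v \<ge> 3"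
    and lv: "{v \<in> V. outdeg V A v = 0} = X"
    unfolding phylo_tree_def by blast
  have finV: "finite V" and AV: "A \<subseteq> V \<times> V" using dg unfolding digraph_def by auto
  have "rooted_phylo_tree X V A \<rho>"
  proof
    show "finite V" "A \<subseteq> V \<times> V" by (fact finV) (fact AV)
    show "\<rho> \<in> V" using rt unfolding is_root_def by blast
    show "(u, \<rho>) \<notin> A" for u
    proof
      assume "(u, \<rho>) \<in> A"
      then have "u \<in> {u \<in> V. (u, \<rho>) \<in> A}" using AV by auto
      moreover have "finite {u \<in> V. (u, \<rho>) \<in> A}" using finV by simp
      ultimately have "card {u \<in> V. (u, \<rho>) \<in> A} \<noteq> 0" by (metis card_0_eq empty_iff)
      then show False using rt unfolding is_root_def indeg_def by simp
    qed
    show "(\<rho>, v) \<in> A\<^sup>*" if "v \<in> V" for v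
    proof -
      have "A \<inter> V \<times> V = A" using AV by blast
      then show ?thesis using rt that unfolding is_root_def by simp
    qed
    show "indeg V A v = 1" if "v \<in> V - {\<rho>}" for v using i1 that by blast
    show "outdeg V A \<rho> \<ge> 2" by (fact o2)
    show "outdeg V A v \<ge> 2" if "v \<in> V - {\<rho>}" "outdeg V A v \<noteq> 0" for v
    proof -
      have "indeg V A v = 1" "indeg V A v + outdeg V A v \<ge> 3" using i1 o3 that by auto
      then show ?thesis by linarith
    qed
    show "{v \<in> V. outdeg V A v = 0} = X" by (fact lv)
  qed
  then show thesis by (rule that)
qed

context rooted_phylo_tree
begin

lemma finite_A: "finite A" using finite_V arcs_V finite_subset by blast

lemma arc_V: "(a, b) \<in> A \<Longrightarrow> a \<in> V \<and> b \<in> V" using arcs_V by blast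

lemma leaves_V: "X \<subseteq> V" using leaves_X by auto

lemma finite_X: "finite X" using leaves_V finite_V finite_subset by blast

lemma unique_parent: "(p, z) \<in> A \<Longrightarrow> (q, z) \<in> A \<Longrightarrow> p = q"
proof -
  assume a: "(p, z) \<in> A" "(q, z) \<in> A"
  hence z: "z \<in> V - {\<rho>}" using arcs_V root_no_parent by blast
  have "card {u \<in> V. (u, z) \<in> A} = 1" using indeg_one[OF z] unfolding indeg_def .
  then obtain c where "{u \<in> V. (u, z) \<in> A} = {c}" by (meson card_1_singletonE)
  moreover have "p \<in> {u \<in> V. (u, z) \<in> A}" "q \<in> {u \<in> V. (u, z) \<in> A}" using a arcs_V by auto
  ultimately show ?thesis by auto
qed

lemma trancl_V: "(a, b) \<in> A\<^sup>+ \<Longrightarrow> a \<in> V \<and> b \<in> V"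
  using arcs_V by (metis (no_types, lifting) SigmaD1 SigmaD2 subsetD trancl.cases tranclD)

text \<open>A vertex on a cycle would have a parent on the cycle; walking up from the root
  along the unique parents this is impossible.\<close>
lemma tree_acyclic: "acyclic A"
proof -
  have "(w, w) \<notin> A\<^sup>+" if "(\<rho>, w) \<in> A\<^sup>*" for w
    using that
  proof (induction rule: rtrancl_induct)
    case base
    show ?case using root_no_parent by (metis tranclD2)
  next
    case (step y z)
    show ?case
    proof
      assume "(z, z) \<in> A\<^sup>+"
      then obtain p where p: "(z, p) \<in> A\<^sup>*" "(p, z) \<in> A" by (metis tranclD2)
      with step have "p = y" using unique_parent by blast
      with p step(2) have "(y, y) \<in> A\<^sup>+" by (meson rtrancl_into_trancl2)
      with step show False by blast
    qed
  qed
  thus ?thesis unfolding acyclic_def using trancl_V root_reach by blast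
qed

lemma no_loop: "(a, a) \<notin> A" using tree_acyclic unfolding acyclic_def by blast

lemma ancestor_antisym: "(a, b) \<in> A\<^sup>* \<Longrightarrow> (b, a) \<in> A\<^sup>* \<Longrightarrow> a = b"
  using tree_acyclic unfolding acyclic_def
  by (metis rtrancl_eq_or_trancl trancl_rtrancl_trancl)

lemma ancestors_comparable:
  "(a, c) \<in> A\<^sup>* \<Longrightarrow> (b, c) \<in> A\<^sup>* \<Longrightarrow> (a, b) \<in> A\<^sup>* \<or> (b, a) \<in> A\<^sup>*"
proof (induction c rule: rtrancl_induct)
  case base
  then show ?case by blast
next
  case (step y z)
  show ?case
  proof (cases "b = z")
    case True
    then show ?thesis using step by (meson rtrancl.rtrancl_into_rtrancl)
  next
    case False
    then have "(b, z) \<in> A\<^sup>+" using step by (auto simp: rtrancl_eq_or_trancl)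
    then obtain p where "(b, p) \<in> A\<^sup>*" "(p, z) \<in> A" by (metis tranclD2)
    then have "(b, y) \<in> A\<^sup>*" using unique_parent step by blast
    then show ?thesis using step by blast
  qed
qed

lemma leaf_iff: "x \<in> X \<longleftrightarrow> x \<in> V \<and> (\<forall>w. (x, w) \<notin> A)"
proof -
  have "outdeg V A x = 0 \<longleftrightarrow> (\<forall>w. (x, w) \<notin> A)" if "x \<in> V" for x
  proof -
    have "finite {w \<in> V. (x, w) \<in> A}" using finite_V by simp
    thus ?thesis unfolding outdeg_def using arcs_V by auto
  qed
  thus ?thesis using leaves_X by blast
qed

lemma root_not_leaf: "\<rho> \<notin> X"
proof -
  have "{w \<in> V. (\<rho>, w) \<in> A} \<noteq> {}"
    using root_outdeg unfolding outdeg_def by (metis card.empty not_numeral_le_zero)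
  thus ?thesis using leaf_iff by auto
qed

lemma reach_leaf: "w \<in> V \<Longrightarrow> \<exists>x\<in>X. (w, x) \<in> A\<^sup>*"
proof (induction w rule: wf_induct[OF finite_acyclic_wf_converse[OF finite_A tree_acyclic]])
  case (1 w)
  show ?case
  proof (cases "\<forall>z. (w, z) \<notin> A")
    case True
    then show ?thesis using leaf_iff 1 by blast
  next
    case False
    then obtain z where z: "(w, z) \<in> A" by blast
    then have "z \<in> V" using arcs_V by auto
    with 1 z obtain x where "x \<in> X" "(z, x) \<in> A\<^sup>*" by blast
    then show ?thesis using z by (meson converse_rtrancl_into_rtrancl)
  qed
qed

lemma disjoint_children:
  assumes c: "(\<rho>, c1) \<in> A" "(\<rho>, c2) \<in> A" "c1 \<noteq> c2"
  shows "(c1, w) \<in> A\<^sup>* \<Longrightarrow> (c2, w) \<notin> A\<^sup>*"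
proof (induction w rule: rtrancl_induct)
  case base
  show ?case
  proof
    assume "(c2, c1) \<in> A\<^sup>*"
    then have "(c2, c1) \<in> A\<^sup>+" using c by (auto simp: rtrancl_eq_or_trancl)
    then obtain p where "(c2, p) \<in> A\<^sup>*" "(p, c1) \<in> A" by (metis tranclD2)
    then have "(c2, \<rho>) \<in> A\<^sup>*" using unique_parent c by blast
    then show False using c root_no_parent by (metis rtranclD tranclD2)
  qed
next
  case (step y z)
  show ?case
  proof
    assume a: "(c2, z) \<in> A\<^sup>*"
    show False
    proof (cases "z = c2")
      case True
      then have "y = \<rho>" using unique_parent step c by blast
      then show False using step root_no_parent c by (metis rtranclD tranclD2)
    next
      case False
      then have "(c2, z) \<in> A\<^sup>+" using a by (auto simp: rtrancl_eq_or_trancl)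
      then obtain p where "(c2, p) \<in> A\<^sup>*" "(p, z) \<in> A" by (metis tranclD2)
      then have "(c2, y) \<in> A\<^sup>*" using unique_parent step by blast
      then show False using step by blast
    qed
  qed
qed

text \<open>The root has two children, whose subtrees contain distinct leaves.\<close>
lemma two_leaves: "card X \<ge> 2"
proof -
  have fin: "finite {w \<in> V. (\<rho>, w) \<in> A}" using finite_V by simp
  have "\<not> card {w \<in> V. (\<rho>, w) \<in> A} \<le> Suc 0" using root_outdeg unfolding outdeg_def by linarith
  then obtain c1 c2 where c: "c1 \<in> {w \<in> V. (\<rho>, w) \<in> A}" "c2 \<in> {w \<in> V. (\<rho>, w) \<in> A}" "c1 \<noteq> c2"
    using card_le_Suc0_iff_eq[OF fin] by blast
  obtain x1 where x1: "x1 \<in> X" "(c1, x1) \<in> A\<^sup>*" using reach_leaf c by blast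
  obtain x2 where x2: "x2 \<in> X" "(c2, x2) \<in> A\<^sup>*" using reach_leaf c by blast
  have "x1 \<noteq> x2" using disjoint_children[of c1 c2 x1] c x1 x2 by auto
  then have "\<not> card X \<le> Suc 0" using x1 x2 finite_X card_le_Suc0_iff_eq by blast
  then show ?thesis by linarith
qed

end

lemma ell_le:
  assumes "phylo_network (Inl ` X) VN AN" "obtained_by_adding X V A VN AN h"
    "gene_labelling X Gs G k VN AN F"
  shows "ell X V A Gs G k \<le> enat h"
  unfolding ell_def by (rule Inf_lower) (use assms in blast)

text \<open>A finite value of \<open>ell\<close> is attained by some network, since \<open>enat\<close> is well-ordered.\<close>
lemma ell_attained:
  assumes "ell X V A Gs G k = enat h"
  obtains VN AN F where "phylo_network (Inl ` X) VN AN" "obtained_by_adding X V A VN AN h"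
    "gene_labelling X Gs G k VN AN F"
proof -
  define SS where "SS = {enat h | h. \<exists>VN AN. phylo_network (Inl ` X) VN AN \<and>
       obtained_by_adding X V A VN AN h \<and> (\<exists>F. gene_labelling X Gs G k VN AN F)}"
  have ell: "ell X V A Gs G k = Inf SS" unfolding ell_def SS_def ..
  have "SS \<noteq> {}" using assms unfolding ell by (auto simp: Inf_enat_def)
  then obtain z where "z \<in> SS" by blast
  then have "Inf SS \<in> SS" unfolding Inf_enat_def by (auto intro: LeastI)
  then show thesis using that assms unfolding ell SS_def by auto
qed

lemma induced_rootedI:
  assumes "r \<in> S" "\<And>u. u \<in> S \<Longrightarrow> (u, r) \<notin> R" "\<And>v. v \<in> S \<Longrightarrow> (r, v) \<in> (R \<inter> S \<times> S)\<^sup>*"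
  shows "induced_rooted R S"
proof -
  have "{u \<in> S. (u, r) \<in> R \<inter> S \<times> S} = {}" using assms(2) by blast
  then have "indeg S (R \<inter> S \<times> S) r = 0" unfolding indeg_def by (metis card.empty)
  moreover have "R \<inter> S \<times> S \<inter> S \<times> S = R \<inter> S \<times> S" by blast
  ultimately have "is_root S (R \<inter> S \<times> S) r" unfolding is_root_def using assms(1,3) by simp
  then show ?thesis unfolding induced_rooted_def rooted_def by blast
qed

section \<open>Upper bound: adding one vertex per block of genes\<close>

lemma index_div_le_ceiling:
  fixes i n k :: nat
  assumes "i < n" "k > 0"
  shows "int (i div k) \<le> \<lceil>(real n - real k) / real k\<rceil>"
proof -
  have "i div k * k \<le> i" by simp
  hence "real (i div k) * real k < real n" using assms
    by (metis of_nat_less_iff of_nat_mult order_le_less_trans)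
  hence "real (i div k) < real n / real k" using assms by (simp add: field_simps)
  hence "real (i div k) < (real n - real k) / real k + 1" using assms by (simp add: field_simps)
  hence "of_int (int (i div k) - 1) < (real n - real k) / real k" by simp
  hence "int (i div k) - 1 < \<lceil>(real n - real k) / real k\<rceil>"
    by (meson le_of_int_ceiling less_le_trans of_int_less_iff)
  thus ?thesis by linarith
qed

text \<open>A finite set of genes splits into blocks \<open>0, \<dots>, \<lceil>(|Gs| - k)/k\<rceil>\<close> of at most
  \<open>k\<close> genes each: number the genes and divide the number by \<open>k\<close>.\<close>
lemma gene_blocks:
  fixes Gs :: "'g set" and k :: nat
  assumes fin: "finite Gs" and k: "k > 0"
  obtains blk :: "'g \<Rightarrow> nat"
  where "\<And>g. g \<in> Gs \<Longrightarrow> blk g \<le> nat \<lceil>(real (card Gs) - real k) / real k\<rceil>"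
    and "\<And>j. card {g \<in> Gs. blk g = j} \<le> k"
proof -
  obtain f where f: "bij_betw f {0..<card Gs} Gs" using ex_bij_betw_nat_finite[OF fin] by blast
  define idx where "idx = inv_into {0..<card Gs} f"
  have idx: "bij_betw idx Gs {0..<card Gs}" unfolding idx_def using f by (simp add: bij_betw_inv_into)
  define blk where "blk g = idx g div k" for g
  have "blk g \<le> nat \<lceil>(real (card Gs) - real k) / real k\<rceil>" if "g \<in> Gs" for g
  proof -
    have "idx g < card Gs" using idx that by (auto simp: bij_betw_def)
    thus ?thesis using index_div_le_ceiling[OF _ k] unfolding blk_def by fastforce
  qed
  moreover have "card {g \<in> Gs. blk g = j} \<le> k" for j
  proof -
    have "idx ` {g \<in> Gs. blk g = j} \<subseteq> {j * k ..< j * k + k}"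
    proof
      fix i assume "i \<in> idx ` {g \<in> Gs. blk g = j}"
      then have "i div k = j" unfolding blk_def by auto
      moreover have "i div k * k \<le> i" by (rule div_times_less_eq_dividend)
      moreover have "i < k + i div k * k" using k by (rule dividend_less_div_times)
      ultimately show "i \<in> {j * k ..< j * k + k}" by (simp add: add.commute)
    qed
    hence "card (idx ` {g \<in> Gs. blk g = j}) \<le> k"
      by (metis card_atLeastLessThan card_mono diff_add_inverse finite_atLeastLessThan)
    moreover have "inj_on idx {g \<in> Gs. blk g = j}" using idx by (auto simp: bij_betw_def inj_on_def)
    ultimately show ?thesis by (simp add: card_image)
  qed
  ultimately show thesis by (rule that)
qed

text \<open>Moving the factor \<open>n + 1\<close> out of \<open>nat\<close>; both sides vanish for negative \<open>c\<close>.\<close>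
lemma nat_mult_Suc: "nat c * (n + 1) = nat (c * (int n + 1))"
proof (cases "c \<ge> 0")
  case True
  have "nat (int n + 1) = n + 1" by simp
  then show ?thesis using True by (simp only: nat_mult_distrib)
next
  case False
  then show ?thesis by (simp add: mult_nonpos_nonneg)
qed

context rooted_phylo_tree
begin

definition tree_arcs :: "(('a + nat) \<times> ('a + nat)) set" where
  "tree_arcs = (\<lambda>(a, b). (Inl a, Inl b)) ` A"

definition new_arcs :: "nat \<Rightarrow> (('a + nat) \<times> ('a + nat)) set" where
  "new_arcs m = (\<lambda>j. (Inl \<rho>, Inr j)) ` {0..<m} \<union> (\<lambda>(j, x). (Inr j, Inl x)) ` ({0..<m} \<times> X)"

definition net_V :: "nat \<Rightarrow> ('a + nat) set" where
  "net_V m = Inl ` V \<union> Inr ` {0..<m}"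

definition net_A :: "nat \<Rightarrow> (('a + nat) \<times> ('a + nat)) set" where
  "net_A m = tree_arcs \<union> new_arcs m"

lemma net_arc_iff: "(y, z) \<in> net_A m \<longleftrightarrow> (\<exists>a b. (a, b) \<in> A \<and> y = Inl a \<and> z = Inl b) \<or>
    (\<exists>j<m. y = Inl \<rho> \<and> z = Inr j) \<or> (\<exists>j<m. \<exists>x\<in>X. y = Inr j \<and> z = Inl x)"
  unfolding net_A_def tree_arcs_def new_arcs_def by auto

lemma net_arcs_V: "net_A m \<subseteq> net_V m \<times> net_V m"
proof (rule subrelI)
  fix y z assume "(y, z) \<in> net_A m"
  moreover have "Inl a \<in> net_V m" if "a \<in> V" for a using that by (simp add: net_V_def)
  moreover have "Inr j \<in> net_V m" if "j < m" for j using that by (simp add: net_V_def)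
  ultimately show "(y, z) \<in> net_V m \<times> net_V m"
    using leaves_V root_V unfolding net_arc_iff by (blast dest: arc_V)
qed

lemma card_new_arcs: "card (new_arcs m) = m * (card X + 1)"
proof -
  have "card ((\<lambda>j. (Inl \<rho> :: 'a + nat, Inr j :: 'a + nat)) ` {0..<m}) = m"
    by (subst card_image) (auto simp: inj_on_def)
  moreover have "card ((\<lambda>(j, x). (Inr j :: 'a + nat, Inl x :: 'a + nat)) ` ({0..<m} \<times> X)) = m * card X"
    by (subst card_image) (auto simp: inj_on_def card_cartesian_product)
  ultimately show ?thesis unfolding new_arcs_def using finite_X by (subst card_Un_disjoint) auto
qed

lemma Inl_rtrancl: "(a, b) \<in> A\<^sup>* \<Longrightarrow> (Inl a, Inl b) \<in> tree_arcs\<^sup>*"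
proof (induction rule: rtrancl_induct)
  case base
  then show ?case by simp
next
  case (step y z)
  show ?case by (rule rtrancl_into_rtrancl[OF step(3)]) (use step(2) in \<open>force simp: tree_arcs_def\<close>)
qed

lemma net_outdeg_tree: "v \<noteq> \<rho> \<Longrightarrow> outdeg (net_V m) (net_A m) (Inl v) = outdeg V A v"
proof -
  assume "v \<noteq> \<rho>"
  then have "{w \<in> net_V m. (Inl v, w) \<in> net_A m} = Inl ` {w \<in> V. (v, w) \<in> A}"
    by (auto simp: net_arc_iff net_V_def)
  then show ?thesis unfolding outdeg_def by (simp add: card_image)
qed

lemma net_outdeg_root: "outdeg (net_V m) (net_A m) (Inl \<rho>) \<ge> 2"
proof -
  have "outdeg V A \<rho> = card (Inl ` {w \<in> V. (\<rho>, w) \<in> A} :: ('a + nat) set)"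
    unfolding outdeg_def by (simp add: card_image)
  also have "\<dots> \<le> outdeg (net_V m) (net_A m) (Inl \<rho>)"
    unfolding outdeg_def net_V_def by (rule card_mono) (auto simp: finite_V net_arc_iff)
  finally show ?thesis using root_outdeg by linarith
qed

lemma net_outdeg_new: "j < m \<Longrightarrow> outdeg (net_V m) (net_A m) (Inr j) = card X"
proof -
  assume "j < m"
  then have "{w \<in> net_V m. (Inr j, w) \<in> net_A m} = Inl ` X"
    using leaves_V by (auto simp: net_arc_iff net_V_def)
  then show ?thesis unfolding outdeg_def by (simp add: card_image)
qed

text \<open>The network is acyclic: every path is a tree path, or starts at the root or a new
  vertex and ends at a new vertex or a leaf; none of these returns to its start.\<close>
lemma net_acyclic: "acyclic (net_A m)"
proof -
  define Reach :: "'a + nat \<Rightarrow> 'a + nat \<Rightarrow> bool" where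
    "Reach y z \<longleftrightarrow> (\<exists>a b. y = Inl a \<and> z = Inl b \<and> (a, b) \<in> A\<^sup>+) \<or>
      (y = Inl \<rho> \<and> (\<exists>j. z = Inr j)) \<or> ((\<exists>j. y = Inr j) \<and> (\<exists>x\<in>X. z = Inl x)) \<or>
      (y = Inl \<rho> \<and> (\<exists>x\<in>X. z = Inl x))" for y z
  have "Reach y z" if "(y, z) \<in> (net_A m)\<^sup>+" for y z
    using that
  proof (induction rule: trancl_induct)
    case (base z)
    then show ?case unfolding net_arc_iff Reach_def by auto
  next
    case (step z w)
    from step(2) consider (tree) a b where "(a, b) \<in> A" "z = Inl a" "w = Inl b"
      | (root) j where "z = Inl \<rho>" "w = Inr j" | (new) j x where "x \<in> X" "z = Inr j" "w = Inl x"
      unfolding net_arc_iff by blast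
    then show ?case
    proof cases
      case tree
      then show ?thesis using step(3) leaf_iff unfolding Reach_def by (auto intro: trancl_into_trancl)
    next
      case root
      then show ?thesis using step(3) root_no_parent root_not_leaf unfolding Reach_def
        by (auto dest: tranclD2)
    next
      case new
      then show ?thesis using step(3) unfolding Reach_def by auto
    qed
  qed
  moreover have "\<not> Reach y y" for y
    using tree_acyclic root_not_leaf unfolding Reach_def acyclic_def by auto
  ultimately show ?thesis unfolding acyclic_def by blast
qed

lemma net_root: "is_root (net_V m) (net_A m) (Inl \<rho>)"
proof -
  have "{u \<in> net_V m. (u, Inl \<rho>) \<in> net_A m} = {}"
    using root_no_parent root_not_leaf by (auto simp: net_arc_iff)
  then have "indeg (net_V m) (net_A m) (Inl \<rho>) = 0" unfolding indeg_def by (metis card.empty)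
  moreover have "(Inl \<rho>, v) \<in> (net_A m)\<^sup>*" if "v \<in> net_V m" for v
  proof (cases v)
    case (Inl u)
    then have "(Inl \<rho>, Inl u) \<in> tree_arcs\<^sup>*" using that Inl_rtrancl root_reach by (auto simp: net_V_def)
    then show ?thesis using Inl rtrancl_mono[of tree_arcs "net_A m"] by (auto simp: net_A_def)
  next
    case (Inr j)
    then show ?thesis using that by (auto simp: net_arc_iff net_V_def)
  qed
  moreover have "net_A m \<inter> net_V m \<times> net_V m = net_A m" using net_arcs_V by blast
  ultimately show ?thesis unfolding is_root_def using root_V by (auto simp: net_V_def)
qed

lemma net_leaves: "{v \<in> net_V m. outdeg (net_V m) (net_A m) v = 0} = Inl ` X"
proof (intro set_eqI iffI)
  fix v assume v: "v \<in> {v \<in> net_V m. outdeg (net_V m) (net_A m) v = 0}"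
  show "v \<in> Inl ` X"
  proof (cases v)
    case (Inl u)
    then have "u \<noteq> \<rho>" using v net_outdeg_root[of m] by auto
    then show ?thesis using v Inl net_outdeg_tree leaves_X by (auto simp: net_V_def)
  next
    case (Inr j)
    then show ?thesis using v net_outdeg_new two_leaves by (auto simp: net_V_def)
  qed
next
  fix v :: "'a + nat" assume "v \<in> Inl ` X"
  then obtain x where x: "x \<in> X" "v = Inl x" by auto
  then have "x \<noteq> \<rho>" using root_not_leaf by auto
  then show "v \<in> {v \<in> net_V m. outdeg (net_V m) (net_A m) v = 0}"
    using x net_outdeg_tree leaves_X leaves_V by (auto simp: net_V_def)
qed

lemma net_phylo_network: "phylo_network (Inl ` X) (net_V m) (net_A m)"
proof -
  have "outdeg (net_V m) (net_A m) v \<noteq> 1" if "v \<in> net_V m" for v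
  proof (cases v)
    case (Inl u)
    show ?thesis
    proof (cases "u = \<rho>")
      case True
      then show ?thesis using Inl net_outdeg_root[of m] by simp
    next
      case False
      then have "u \<in> V - {\<rho>}" using that Inl by (auto simp: net_V_def)
      then have "outdeg V A u \<noteq> 1" using inner_outdeg[of u] by fastforce
      then show ?thesis using net_outdeg_tree[OF False, of m] Inl by simp
    qed
  next
    case (Inr j)
    then show ?thesis using that net_outdeg_new two_leaves by (auto simp: net_V_def)
  qed
  moreover have "finite (net_V m)" using finite_V by (simp add: net_V_def)
  ultimately show ?thesis
    unfolding phylo_network_def digraph_def
    using net_arcs_V[of m] net_acyclic[of m] net_root[of m] net_outdeg_root[of m] net_leaves[of m]
    by blast
qed

text \<open>The tree itself, with every arc kept as a single-arc path, is the subdivision.\<close>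
lemma net_obtained_by_adding: "obtained_by_adding X V A (net_V m) (net_A m) (m * (card X + 1))"
proof -
  define P :: "'a \<times> 'a \<Rightarrow> ('a + nat) list" where "P e = [Inl (fst e), Inl (snd e)]" for e
  have "path_arcs (P e) = {(Inl (fst e), Inl (snd e))}" for e
    unfolding path_arcs_def P_def by simp
  then have "(\<Union>e\<in>A. path_arcs (P e)) = tree_arcs" unfolding tree_arcs_def by auto
  moreover have "Inl ` V = Inl ` V \<union> (\<Union>e\<in>A. set (P e))" unfolding P_def using arcs_V by auto
  moreover have "\<forall>e\<in>A. length (P e) \<ge> 2 \<and> hd (P e) = Inl (fst e) \<and> last (P e) = Inl (snd e) \<and>
      distinct (P e) \<and> set (interior (P e)) \<inter> Inl ` V = {}"
    unfolding P_def interior_def using no_loop by auto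
  moreover have "\<forall>e1\<in>A. \<forall>e2\<in>A. e1 \<noteq> e2 \<longrightarrow> set (interior (P e1)) \<inter> set (interior (P e2)) = {}"
    unfolding P_def interior_def by auto
  ultimately have "subdivision V A (Inl ` V) tree_arcs Inl P" unfolding subdivision_def by auto
  moreover have "net_A m - tree_arcs = new_arcs m"
    unfolding net_A_def tree_arcs_def new_arcs_def by auto
  then have "card (net_A m - tree_arcs) = m * (card X + 1)" using card_new_arcs by simp
  moreover have "Inl ` V \<subseteq> net_V m" "tree_arcs \<subseteq> net_A m" by (auto simp: net_V_def net_A_def)
  ultimately show ?thesis unfolding obtained_by_adding_def by blast
qed

definition block_label :: "'g set \<Rightarrow> ('a \<Rightarrow> 'g set) \<Rightarrow> ('g \<Rightarrow> nat) \<Rightarrow> 'a + nat \<Rightarrow> 'g set" where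
  "block_label Gs G blk v = (case v of Inl u \<Rightarrow> if u \<in> X then G u else {g \<in> Gs. blk g = 0}
     | Inr j \<Rightarrow> {g \<in> Gs. blk g = Suc j})"

text \<open>A gene of block 0 occurs on all internal tree vertices, so its sub-digraph is
  rooted at the tree root.\<close>
lemma block_zero_rooted:
  assumes g: "g \<in> Gs" "blk g = 0"
  shows "induced_rooted (net_A m) {v \<in> net_V m. g \<in> block_label Gs G blk v}"
proof -
  define S where "S = {v \<in> net_V m. g \<in> block_label Gs G blk v}"
  define R where "R = net_A m \<inter> S \<times> S"
  have tree_S: "Inl u \<in> S \<longleftrightarrow> u \<in> V \<and> (u \<notin> X \<or> g \<in> G u)" for u
    using g unfolding S_def by (auto simp: net_V_def block_label_def)
  have tree_path: "(Inl \<rho>, Inl u) \<in> R\<^sup>*" if "(\<rho>, u) \<in> A\<^sup>*" "u \<notin> X \<or> g \<in> G u" for u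
    using that
  proof (induction rule: rtrancl_induct)
    case base
    then show ?case by simp
  next
    case (step y z)
    have "y \<notin> X" using step(2) leaf_iff by blast
    then have "(Inl \<rho>, Inl y) \<in> R\<^sup>*" using step(3) by blast
    moreover have "(Inl y, Inl z) \<in> R"
      using step(2,4) \<open>y \<notin> X\<close> arc_V[OF step(2)] tree_S unfolding R_def by (auto simp: net_arc_iff)
    ultimately show ?case by (rule rtrancl.rtrancl_into_rtrancl)
  qed
  show ?thesis unfolding S_def[symmetric]
  proof (rule induced_rootedI)
    show "Inl \<rho> \<in> S" using tree_S root_V root_not_leaf by blast
    show "(u, Inl \<rho>) \<notin> net_A m" for u using root_no_parent root_not_leaf by (auto simp: net_arc_iff)
    show "(Inl \<rho>, v) \<in> (net_A m \<inter> S \<times> S)\<^sup>*" if "v \<in> S" for v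
    proof (cases v)
      case (Inl u)
      then show ?thesis using that tree_S tree_path root_reach unfolding R_def by blast
    next
      case (Inr j)
      then show ?thesis using that g by (auto simp: S_def block_label_def)
    qed
  qed
qed

text \<open>A gene of block \<open>j + 1\<close> occurs only on \<open>Inr j\<close> and on leaves, all children of \<open>Inr j\<close>.\<close>
lemma block_new_rooted:
  assumes g: "g \<in> Gs" "blk g = Suc j" and j: "j < m"
  shows "induced_rooted (net_A m) {v \<in> net_V m. g \<in> block_label Gs G blk v}"
proof -
  define S where "S = {v \<in> net_V m. g \<in> block_label Gs G blk v}"
  show ?thesis unfolding S_def[symmetric]
  proof (rule induced_rootedI)
    show "Inr j \<in> S" using g j by (auto simp: S_def net_V_def block_label_def)
    show "(u, Inr j) \<notin> net_A m" if "u \<in> S" for u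
      using that g root_not_leaf by (auto simp: S_def net_arc_iff block_label_def)
    show "(Inr j, v) \<in> (net_A m \<inter> S \<times> S)\<^sup>*" if v: "v \<in> S" for v
    proof (cases v)
      case (Inl u)
      then have "u \<in> X" using v g by (auto simp: S_def block_label_def split: if_splits)
      then have "(Inr j, v) \<in> net_A m" using j Inl by (auto simp: net_arc_iff)
      then show ?thesis using v \<open>Inr j \<in> S\<close> by auto
    next
      case (Inr j')
      then show ?thesis using v g by (auto simp: S_def block_label_def)
    qed
  qed
qed

lemma net_gene_labelling:
  assumes genomes: "\<forall>x\<in>X. G x \<subseteq> Gs" "\<forall>x\<in>X. card (G x) \<le> k"
    and blk: "\<And>g. g \<in> Gs \<Longrightarrow> blk g \<le> m" "\<And>j. card {g \<in> Gs. blk g = j} \<le> k"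
  shows "gene_labelling X Gs G k (net_V m) (net_A m) (block_label Gs G blk)"
proof -
  have "block_label Gs G blk v \<subseteq> Gs \<and> card (block_label Gs G blk v) \<le> k" for v
  proof (cases v)
    case (Inl u)
    then show ?thesis using genomes blk(2)[of 0] by (cases "u \<in> X") (auto simp: block_label_def)
  next
    case (Inr j)
    then show ?thesis using blk(2)[of "Suc j"] by (auto simp: block_label_def)
  qed
  moreover have "induced_rooted (net_A m) {v \<in> net_V m. g \<in> block_label Gs G blk v}"
    if "g \<in> Gs" for g
  proof (cases "blk g")
    case 0
    then show ?thesis by (rule block_zero_rooted[OF that])
  next
    case (Suc j)
    then have "j < m" using blk(1)[OF that] by simp
    then show ?thesis by (rule block_new_rooted[of g Gs blk j m G, OF that Suc])
  qed
  moreover have "block_label Gs G blk (Inl x) = G x" if "x \<in> X" for x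
    using that by (simp add: block_label_def)
  ultimately show ?thesis unfolding gene_labelling_def by blast
qed

lemma ell_upper:
  assumes "finite Gs" "\<forall>x\<in>X. G x \<subseteq> Gs" "k > 0" "\<forall>x\<in>X. card (G x) \<le> k"
  shows "ell X V A Gs G k \<le> enat (nat (\<lceil>(real (card Gs) - real k) / real k\<rceil> * (int (card X) + 1)))"
proof -
  define m where "m = nat \<lceil>(real (card Gs) - real k) / real k\<rceil>"
  obtain blk where "\<And>g. g \<in> Gs \<Longrightarrow> blk g \<le> m" "\<And>j. card {g \<in> Gs. blk g = j} \<le> k"
    using gene_blocks[OF assms(1,3)] unfolding m_def by blast
  then have "ell X V A Gs G k \<le> enat (m * (card X + 1))"
    using ell_le net_phylo_network net_obtained_by_adding net_gene_labelling assms by blast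
  moreover have "m * (card X + 1) = nat (\<lceil>(real (card Gs) - real k) / real k\<rceil> * (int (card X) + 1))"
    unfolding m_def by (rule nat_mult_Suc)
  ultimately show ?thesis by simp
qed

end

section \<open>Lower bound: bad vertices are lowest common ancestors of added-arc endpoints\<close>

lemma nth_interior: "0 < j \<Longrightarrow> j < length p - 1 \<Longrightarrow> p ! j \<in> set (interior p)"
proof -
  assume j: "0 < j" "j < length p - 1"
  have "interior p ! (j - 1) = p ! j" unfolding interior_def using j
    by (simp add: nth_butlast nth_tl)
  moreover have "j - 1 < length (interior p)" unfolding interior_def using j by simp
  ultimately show ?thesis by (metis nth_mem)
qed

lemma last_added_arc:
  assumes "(r, x) \<in> R\<^sup>*"
  shows "(r, x) \<in> (R \<inter> E)\<^sup>* \<or> (\<exists>t s. (t, s) \<in> R \<and> (t, s) \<notin> E \<and> (s, x) \<in> (R \<inter> E)\<^sup>*)"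
  using assms
proof (induction rule: rtrancl_induct)
  case base then show ?case by simp
next
  case (step y z)
  show ?case
  proof (cases "(y, z) \<in> E")
    case True
    then have yz: "(y, z) \<in> R \<inter> E" using step by blast
    from step(3) show ?thesis
      by (meson rtrancl.rtrancl_into_rtrancl yz)
  next
    case False
    then show ?thesis using step(2) by blast
  qed
qed

lemma first_added_arc:
  assumes "(r, x) \<in> R\<^sup>*"
  shows "(r, x) \<in> (R \<inter> E)\<^sup>* \<or> (\<exists>t s. (r, t) \<in> (R \<inter> E)\<^sup>* \<and> (t, s) \<in> R \<and> (t, s) \<notin> E)"
  using assms
proof (induction rule: converse_rtrancl_induct)
  case base then show ?case by simp
next
  case (step y z)
  show ?case
  proof (cases "(y, z) \<in> E")
    case True
    then have yz: "(y, z) \<in> R \<inter> E" using step by blast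
    from step(3) show ?thesis
      by (meson converse_rtrancl_into_rtrancl yz)
  next
    case False
    then show ?thesis using step(1) by blast
  qed
qed

locale tree_subdivision = rooted_phylo_tree X V A \<rho> for X V A \<rho> +
  fixes VT :: "'b set" and AT :: "('b \<times> 'b) set" and \<phi> :: "'a \<Rightarrow> 'b" and P :: "'a \<times> 'a \<Rightarrow> 'b list"
  assumes subdiv: "subdivision V A VT AT \<phi> P"
begin

lemma phi_inj: "inj_on \<phi> V" using subdiv unfolding subdivision_def by blast

lemma path_props: "e \<in> A \<Longrightarrow> length (P e) \<ge> 2 \<and> hd (P e) = \<phi> (fst e) \<and> last (P e) = \<phi> (snd e) \<and>
    distinct (P e) \<and> set (interior (P e)) \<inter> \<phi> ` V = {}"
  using subdiv unfolding subdivision_def by blast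

lemma interiors_disjoint:
  "e1 \<in> A \<Longrightarrow> e2 \<in> A \<Longrightarrow> y \<in> set (interior (P e1)) \<Longrightarrow> y \<in> set (interior (P e2)) \<Longrightarrow> e1 = e2"
  using subdiv unfolding subdivision_def by blast

lemma phi_VT: "\<phi> ` V \<subseteq> VT" using subdiv unfolding subdivision_def by blast

lemma AT_eq: "AT = (\<Union>e\<in>A. path_arcs (P e))" using subdiv unfolding subdivision_def by blast

text \<open>Projection onto the tree: an original vertex goes to its preimage, an interior
  vertex of the path replacing \<open>(a, b)\<close> goes to the lower end \<open>b\<close>.\<close>
definition proj :: "'b \<Rightarrow> 'a" where
  "proj y = (if y \<in> \<phi> ` V then the_inv_into V \<phi> y
             else snd (SOME e. e \<in> A \<and> y \<in> set (interior (P e))))"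

lemma proj_phi: "u \<in> V \<Longrightarrow> proj (\<phi> u) = u"
  unfolding proj_def using phi_inj by (simp add: the_inv_into_f_f)

lemma proj_interior: "e \<in> A \<Longrightarrow> y \<in> set (interior (P e)) \<Longrightarrow> proj y = snd e"
proof -
  assume e: "e \<in> A" "y \<in> set (interior (P e))"
  then have "y \<notin> \<phi> ` V" using path_props by blast
  moreover have "(SOME e. e \<in> A \<and> y \<in> set (interior (P e))) = e"
    using e interiors_disjoint by (metis (no_types, lifting) someI_ex)
  ultimately show ?thesis unfolding proj_def by simp
qed

lemma subdivision_arc_cases:
  assumes "(y, z) \<in> AT"
  shows "(proj y = proj z \<and> y \<notin> \<phi> ` V) \<or> ((proj y, proj z) \<in> A \<and> y = \<phi> (proj y))"
proof -
  obtain e where e: "e \<in> A" "(y, z) \<in> path_arcs (P e)" using assms AT_eq by blast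
  obtain a b where ab: "e = (a, b)" by (cases e)
  have abV: "a \<in> V" "b \<in> V" using e ab arcs_V by auto
  define p where "p = P e"
  have pp: "length p \<ge> 2" "hd p = \<phi> a" "last p = \<phi> b" "distinct p" "set (interior p) \<inter> \<phi> ` V = {}"
    using path_props[OF e(1)] ab unfolding p_def by auto
  obtain i where i: "i < length p - 1" "y = p ! i" "z = p ! Suc i"
    using e(2) unfolding path_arcs_def p_def[symmetric] by (auto simp: set_zip nth_tl)
  have hd0: "p ! 0 = \<phi> a" using pp by (metis hd_conv_nth list.size(3) not_numeral_le_zero)
  have lastn: "p ! (length p - 1) = \<phi> b" using pp by (metis last_conv_nth list.size(3) not_numeral_le_zero)
  have zb: "proj z = b"
  proof (cases "Suc i = length p - 1")
    case True
    then show ?thesis using i lastn proj_phi abV by auto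
  next
    case False
    then have "z \<in> set (interior p)" using i nth_interior[of "Suc i" p] by simp
    then show ?thesis using proj_interior[OF e(1)] ab unfolding p_def by simp
  qed
  show ?thesis
  proof (cases "i = 0")
    case True
    then have "y = \<phi> a" using i hd0 by simp
    then show ?thesis using zb proj_phi abV e ab by auto
  next
    case False
    then have yint: "y \<in> set (interior p)" using i nth_interior[of i p] by simp
    then have "proj y = b" using proj_interior[OF e(1)] ab unfolding p_def by simp
    moreover have "y \<notin> \<phi> ` V" using yint pp by blast
    ultimately show ?thesis using zb by simp
  qed
qed

lemma proj_rt: "(y, z) \<in> AT\<^sup>* \<Longrightarrow> (proj y, proj z) \<in> A\<^sup>*"
proof (induction rule: rtrancl_induct)
  case base then show ?case by simp
next
  case (step u w)
  then show ?case using subdivision_arc_cases[OF step(2)] by (metis rtrancl.rtrancl_into_rtrancl)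
qed

text \<open>Walking backwards along subdivision arcs that never leave \<open>\<phi> v\<close>, one cannot climb
  to or above \<open>v\<close>: if \<open>v\<close> is a proper ancestor of \<open>proj x\<close> and every ancestor of
  \<open>proj x\<close> with property \<open>Q\<close> is an ancestor of \<open>v\<close>, the same holds for \<open>proj s\<close>.\<close>
lemma ascend_path:
  assumes "(s, x) \<in> (R \<inter> AT)\<^sup>*" "\<forall>(y, z)\<in>R. y \<noteq> \<phi> v"
    "(v, proj x) \<in> A\<^sup>+" "\<forall>w\<in>V. (w, proj x) \<in> A\<^sup>* \<and> Q w \<longrightarrow> (w, v) \<in> A\<^sup>*"
  shows "(v, proj s) \<in> A\<^sup>+ \<and> (\<forall>w\<in>V. (w, proj s) \<in> A\<^sup>* \<and> Q w \<longrightarrow> (w, v) \<in> A\<^sup>*)"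
  using assms(1)
proof (induction rule: converse_rtrancl_induct)
  case base
  then show ?case using assms by blast
next
  case (step y z)
  have yz: "(y, z) \<in> AT" "(y, z) \<in> R" using step by auto
  from subdivision_arc_cases[OF yz(1)] show ?case
  proof
    assume "proj y = proj z \<and> y \<notin> \<phi> ` V"
    then show ?thesis using step by simp
  next
    assume a: "(proj y, proj z) \<in> A \<and> y = \<phi> (proj y)"
    have "y \<noteq> \<phi> v" using yz(2) assms(2) by blast
    hence ne: "proj y \<noteq> v" using a by metis
    obtain p where p: "(v, p) \<in> A\<^sup>*" "(p, proj z) \<in> A" using step(3) by (metis tranclD2)
    then have "p = proj y" using a unique_parent by blast
    then have "(v, proj y) \<in> A\<^sup>+" using p ne by (auto simp: rtrancl_eq_or_trancl)
    moreover have "(w, v) \<in> A\<^sup>*" if "w \<in> V" "(w, proj y) \<in> A\<^sup>*" "Q w" for w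
      using step(3) that a by (meson rtrancl.rtrancl_into_rtrancl)
    ultimately show ?thesis by blast
  qed
qed



lemma mrca_sym: "is_mrca V A v x1 x2 \<Longrightarrow> is_mrca V A v x2 x1"
  unfolding is_mrca_def by blast

lemma ascend_from_leaf:
  assumes mrca: "is_mrca V A v x y" and x: "x \<in> X" "x \<noteq> v"
    and avoid: "\<forall>(y, z)\<in>R. y \<noteq> \<phi> v" and path: "(s, \<phi> x) \<in> (R \<inter> AT)\<^sup>*"
    and u: "(u, y) \<in> A\<^sup>*"
  shows "(v, proj s) \<in> A\<^sup>+ \<and> (\<forall>w\<in>V. (w, proj s) \<in> A\<^sup>* \<and> (w, u) \<in> A\<^sup>* \<longrightarrow> (w, v) \<in> A\<^sup>*)"
proof (rule ascend_path[OF path avoid])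
  have "x \<in> V" using x leaves_V by blast
  then show "(v, proj (\<phi> x)) \<in> A\<^sup>+"
    using mrca x proj_phi unfolding is_mrca_def by (auto simp: rtrancl_eq_or_trancl)
  show "\<forall>w\<in>V. (w, proj (\<phi> x)) \<in> A\<^sup>* \<and> (w, u) \<in> A\<^sup>* \<longrightarrow> (w, v) \<in> A\<^sup>*"
    using mrca u \<open>x \<in> V\<close> proj_phi unfolding is_mrca_def by (auto intro: rtrancl_trans)
qed

lemma proj_below_leaf:
  assumes "(s, \<phi> x) \<in> (R \<inter> AT)\<^sup>*" "x \<in> X"
  shows "(proj s, x) \<in> A\<^sup>*"
proof -
  have "(s, \<phi> x) \<in> AT\<^sup>*" using assms(1) rtrancl_mono[of "R \<inter> AT" AT] by blast
  then show ?thesis using proj_rt proj_phi assms(2) leaves_V by fastforce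
qed

definition is_lca :: "'a \<Rightarrow> 'b set \<Rightarrow> bool" where
  "is_lca v Z \<longleftrightarrow> v \<in> V \<and> (\<forall>y\<in>Z. (v, proj y) \<in> A\<^sup>*) \<and>
     (\<forall>w\<in>V. (\<forall>y\<in>Z. (w, proj y) \<in> A\<^sup>*) \<longrightarrow> (w, v) \<in> A\<^sup>*)"

definition lca :: "'b set \<Rightarrow> 'a" where "lca Z = (THE v. is_lca v Z)"

lemma lca_eq: "is_lca v Z \<Longrightarrow> lca Z = v"
  unfolding lca_def by (rule the_equality) (auto simp: is_lca_def intro: ancestor_antisym)

lemma lca_pair:
  assumes "v \<in> V" "(v, proj p) \<in> A\<^sup>+" "(v, proj q) \<in> A\<^sup>+"
    "\<forall>w\<in>V. (w, proj p) \<in> A\<^sup>* \<and> (w, proj q) \<in> A\<^sup>* \<longrightarrow> (w, v) \<in> A\<^sup>*"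
  shows "p \<noteq> q \<and> lca {p, q} = v"
proof
  show "p \<noteq> q"
  proof
    assume "p = q"
    have "proj p \<in> V" using assms(2) trancl_V by blast
    then have "(proj p, v) \<in> A\<^sup>*" using assms(4) \<open>p = q\<close> by blast
    then show False using assms(2) tree_acyclic unfolding acyclic_def
      by (meson rtrancl_into_trancl2 trancl_into_rtrancl trancl_rtrancl_trancl)
  qed
  show "lca {p, q} = v"
    by (rule lca_eq) (use assms in \<open>auto simp: is_lca_def\<close>)
qed

end

locale labelled_network = tree_subdivision X V A \<rho> VT AT \<phi> P for X V A \<rho> VT AT \<phi> P +
  fixes VN :: "'b set" and AN :: "('b \<times> 'b) set" and F :: "'b \<Rightarrow> 'g set"
    and Gs :: "'g set" and G :: "'a \<Rightarrow> 'g set" and k :: nat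
  assumes label_leaves: "\<And>x. x \<in> X \<Longrightarrow> F (\<phi> x) = G x"
    and sub_VN: "VT \<subseteq> VN" and finite_AN: "finite AN"
    and label_bound: "\<And>u. u \<in> VN \<Longrightarrow> card (F u) \<le> k \<and> F u \<subseteq> Gs"
    and label_rooted: "\<And>g. g \<in> Gs \<Longrightarrow> induced_rooted AN {u \<in> VN. g \<in> F u}"
    and finite_Gs: "finite Gs"
begin

text \<open>Endpoints of the added arcs, and the pairs whose lowest common ancestors are the
  only candidates for vertices with \<open>n(v) > k\<close>: two heads, or a tail and a head.\<close>
definition added_heads :: "'b set" where "added_heads = snd ` (AN - AT)"
definition added_tails :: "'b set" where "added_tails = fst ` (AN - AT)"
definition endpoint_pairs :: "'b set set" where
  "endpoint_pairs = {Z. Z \<subseteq> added_heads \<and> card Z = 2} \<union> (\<lambda>(t, s). {t, s}) ` (added_tails \<times> added_heads)"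

text \<open>Case 1: the path to \<open>x1\<close> uses no added arc.  Then the path
  to \<open>x2\<close> must use one; its first added arc has a tail below \<open>proj r\<close> and its last
  added arc a head in the subtree of \<open>x2\<close>, and \<open>v\<close> is their lowest common ancestor.\<close>
lemma bad_vertex_one_side:
  assumes v: "v \<in> V" and x: "x1 \<in> X" "x2 \<in> X" and mrca: "is_mrca V A v x1 x2"
    and gS: "\<phi> x1 \<in> S" "\<phi> x2 \<in> S" "\<phi> v \<notin> S"
    and R: "R \<subseteq> AN \<inter> S \<times> S"
    and r: "(r, \<phi> x1) \<in> (R \<inter> AT)\<^sup>*" "(r, \<phi> x2) \<in> R\<^sup>*"
  shows "v \<in> lca ` endpoint_pairs"
proof -
  have avoid: "\<forall>(y, z)\<in>R. y \<noteq> \<phi> v" using R gS by blast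
  have "x1 \<noteq> v" "x2 \<noteq> v" using gS by auto
  have below_r: "(v, proj r) \<in> A\<^sup>+"
    using ascend_from_leaf[OF mrca x(1) \<open>x1 \<noteq> v\<close> avoid r(1)] by blast
  have not_above_r: False if "(proj r, v) \<in> A\<^sup>*"
    using that below_r tree_acyclic unfolding acyclic_def
    by (meson rtrancl_into_trancl2 trancl_into_rtrancl trancl_rtrancl_trancl)
  have from_x2: "(v, proj s) \<in> A\<^sup>+ \<and> (\<forall>w\<in>V. (w, proj s) \<in> A\<^sup>* \<and> (w, proj r) \<in> A\<^sup>* \<longrightarrow> (w, v) \<in> A\<^sup>*)"
    if "(s, \<phi> x2) \<in> (R \<inter> AT)\<^sup>*" for s
    using ascend_from_leaf[OF mrca_sym[OF mrca] x(2) \<open>x2 \<noteq> v\<close> avoid that proj_below_leaf[OF r(1) x(1)]] .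
  have "(r, \<phi> x2) \<notin> (R \<inter> AT)\<^sup>*"
    using from_x2[of r] below_r trancl_V not_above_r by blast
  then have no_tree_path: "(r, \<phi> x2) \<notin> (R \<inter> AT)\<^sup>*" .
  obtain t0 s2 where s2: "(t0, s2) \<in> R" "(t0, s2) \<notin> AT" "(s2, \<phi> x2) \<in> (R \<inter> AT)\<^sup>*"
    using last_added_arc[OF r(2)] no_tree_path by blast
  obtain t b where t: "(r, t) \<in> (R \<inter> AT)\<^sup>*" "(t, b) \<in> R" "(t, b) \<notin> AT"
    using first_added_arc[OF r(2)] no_tree_path by blast
  have r_t: "(proj r, proj t) \<in> A\<^sup>*"
    using proj_rt t(1) rtrancl_mono[of "R \<inter> AT" AT] by auto
  note s2_below = from_x2[OF s2(3)]
  have "t \<noteq> s2 \<and> lca {t, s2} = v"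
  proof (rule lca_pair[OF v])
    show "(v, proj t) \<in> A\<^sup>+" using below_r r_t by (meson trancl_rtrancl_trancl)
    show "(v, proj s2) \<in> A\<^sup>+" using s2_below by blast
    show "\<forall>w\<in>V. (w, proj t) \<in> A\<^sup>* \<and> (w, proj s2) \<in> A\<^sup>* \<longrightarrow> (w, v) \<in> A\<^sup>*"
    proof (intro ballI impI)
      fix w assume w: "w \<in> V" "(w, proj t) \<in> A\<^sup>* \<and> (w, proj s2) \<in> A\<^sup>*"
      from ancestors_comparable[of w "proj t" "proj r"] w r_t
      consider "(w, proj r) \<in> A\<^sup>*" | "(proj r, w) \<in> A\<^sup>*" by blast
      then show "(w, v) \<in> A\<^sup>*"
      proof cases
        case 1
        then show ?thesis using s2_below w by blast
      next
        case 2
        then have "(proj r, proj s2) \<in> A\<^sup>*" using w by (meson rtrancl_trans)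
        then have "(proj r, v) \<in> A\<^sup>*" using s2_below below_r trancl_V by blast
        then show ?thesis using not_above_r by blast
      qed
    qed
  qed
  moreover have "{t, s2} \<in> endpoint_pairs"
  proof -
    have "t \<in> added_tails" using t R unfolding added_tails_def by force
    moreover have "s2 \<in> added_heads" using s2 R unfolding added_heads_def by force
    ultimately show ?thesis unfolding endpoint_pairs_def by blast
  qed
  ultimately show ?thesis by (metis image_eqI)
qed

text \<open>Case 2: both paths use added arcs.  Then \<open>v\<close> is the lowest common ancestor of the
  heads of their last added arcs.\<close>
lemma bad_vertex_two_heads:
  assumes v: "v \<in> V" and x: "x1 \<in> X" "x2 \<in> X" and mrca: "is_mrca V A v x1 x2"
    and gS: "\<phi> x1 \<in> S" "\<phi> x2 \<in> S" "\<phi> v \<notin> S"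
    and R: "R \<subseteq> AN \<inter> S \<times> S"
    and s1: "(t1, s1) \<in> R" "(t1, s1) \<notin> AT" "(s1, \<phi> x1) \<in> (R \<inter> AT)\<^sup>*"
    and s2: "(t2, s2) \<in> R" "(t2, s2) \<notin> AT" "(s2, \<phi> x2) \<in> (R \<inter> AT)\<^sup>*"
  shows "v \<in> lca ` endpoint_pairs"
proof -
  have avoid: "\<forall>(y, z)\<in>R. y \<noteq> \<phi> v" using R gS by blast
  have "x1 \<noteq> v" "x2 \<noteq> v" using gS by auto
  have "(v, proj s1) \<in> A\<^sup>+"
    using ascend_from_leaf[OF mrca x(1) \<open>x1 \<noteq> v\<close> avoid s1(3)] by blast
  moreover have "(v, proj s2) \<in> A\<^sup>+ \<and>
      (\<forall>w\<in>V. (w, proj s2) \<in> A\<^sup>* \<and> (w, proj s1) \<in> A\<^sup>* \<longrightarrow> (w, v) \<in> A\<^sup>*)"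
    using ascend_from_leaf[OF mrca_sym[OF mrca] x(2) \<open>x2 \<noteq> v\<close> avoid s2(3) proj_below_leaf[OF s1(3) x(1)]] .
  ultimately have "s1 \<noteq> s2 \<and> lca {s1, s2} = v" by (intro lca_pair[OF v]) blast+
  moreover have "{s1, s2} \<in> endpoint_pairs"
  proof -
    have "s1 \<in> added_heads" "s2 \<in> added_heads" using s1 s2 R unfolding added_heads_def by force+
    then show ?thesis using calculation unfolding endpoint_pairs_def by auto
  qed
  ultimately show ?thesis by (metis image_eqI)
qed

text \<open>Every vertex with \<open>n(v) > k\<close> is the lowest common ancestor of an endpoint pair: some
  gene counted by \<open>n(v)\<close> is missing at \<open>\<phi> v\<close>, and the paths from the root of its
  sub-digraph to the two leaves fall into one of the two cases above.\<close>
lemma bad_vertex_is_lca: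
  assumes v: "v \<in> V" and nv: "nval V A X Gs G v > k"
  shows "v \<in> lca ` endpoint_pairs"
proof -
  define Gv where "Gv = {g \<in> Gs. \<exists>x1\<in>X. \<exists>x2\<in>X. g \<in> G x1 \<inter> G x2 \<and> is_mrca V A v x1 x2}"
  have "\<phi> v \<in> VN" using v phi_VT sub_VN by blast
  then have "finite (F (\<phi> v))" "card (F (\<phi> v)) < card Gv"
    using label_bound finite_Gs finite_subset nv unfolding nval_def Gv_def by (metis, fastforce)
  then have "\<not> Gv \<subseteq> F (\<phi> v)" by (meson card_mono leD)
  then obtain g x1 x2 where g: "g \<in> Gs" "x1 \<in> X" "x2 \<in> X" "g \<in> G x1" "g \<in> G x2"
    "is_mrca V A v x1 x2" "g \<notin> F (\<phi> v)" unfolding Gv_def by blast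
  define S where "S = {u \<in> VN. g \<in> F u}"
  define R where "R = AN \<inter> S \<times> S"
  obtain r where r: "is_root S R r" using label_rooted[OF g(1)]
    unfolding induced_rooted_def rooted_def S_def R_def by blast
  have "\<phi> x \<in> S" if "x \<in> X" "g \<in> G x" for x
    using that leaves_V phi_VT sub_VN label_leaves unfolding S_def by auto
  then have gS: "\<phi> x1 \<in> S" "\<phi> x2 \<in> S" "\<phi> v \<notin> S" using g unfolding S_def by auto
  have "R \<inter> S \<times> S = R" unfolding R_def by blast
  then have r1: "(r, \<phi> x1) \<in> R\<^sup>*" and r2: "(r, \<phi> x2) \<in> R\<^sup>*"
    using r gS unfolding is_root_def by auto
  have Rsub: "R \<subseteq> AN \<inter> S \<times> S" unfolding R_def by simp
  consider "(r, \<phi> x1) \<in> (R \<inter> AT)\<^sup>*" | "(r, \<phi> x2) \<in> (R \<inter> AT)\<^sup>*"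
    | "(r, \<phi> x1) \<notin> (R \<inter> AT)\<^sup>*" "(r, \<phi> x2) \<notin> (R \<inter> AT)\<^sup>*" by blast
  then show ?thesis
  proof cases
    case 1
    then show ?thesis by (rule bad_vertex_one_side[OF v g(2,3,6) gS Rsub _ r2])
  next
    case 2
    then show ?thesis
      by (rule bad_vertex_one_side[OF v g(3,2) mrca_sym[OF g(6)] gS(2,1,3) Rsub _ r1])
  next
    case 3
    obtain t1 s1 where "(t1, s1) \<in> R" "(t1, s1) \<notin> AT" "(s1, \<phi> x1) \<in> (R \<inter> AT)\<^sup>*"
      using last_added_arc[OF r1] 3 by blast
    moreover obtain t2 s2 where "(t2, s2) \<in> R" "(t2, s2) \<notin> AT" "(s2, \<phi> x2) \<in> (R \<inter> AT)\<^sup>*"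
      using last_added_arc[OF r2] 3 by blast
    ultimately show ?thesis by (rule bad_vertex_two_heads[OF v g(2,3,6) gS Rsub])
  qed
qed

lemma card_bad_vertices:
  "card {v \<in> V. nval V A X Gs G v > k} \<le> (card (AN - AT) choose 2) + card (AN - AT) * card (AN - AT)"
proof -
  have fin: "finite (AN - AT)" using finite_AN by auto
  then have heads: "finite added_heads" "card added_heads \<le> card (AN - AT)"
    and tails: "finite added_tails" "card added_tails \<le> card (AN - AT)"
    unfolding added_heads_def added_tails_def by (auto intro: card_image_le)
  have "{v \<in> V. nval V A X Gs G v > k} \<subseteq> lca ` endpoint_pairs" using bad_vertex_is_lca by blast
  moreover have fin_pairs: "finite endpoint_pairs" unfolding endpoint_pairs_def using heads tails by auto
  ultimately have "card {v \<in> V. nval V A X Gs G v > k} \<le> card (lca ` endpoint_pairs)"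
    by (meson card_mono finite_imageI)
  also have "\<dots> \<le> card endpoint_pairs" by (rule card_image_le[OF fin_pairs])
  also have "\<dots> \<le> card {Z. Z \<subseteq> added_heads \<and> card Z = 2} +
      card ((\<lambda>(t, s). {t, s}) ` (added_tails \<times> added_heads))"
    unfolding endpoint_pairs_def by (rule card_Un_le)
  also have "\<dots> \<le> (card added_heads choose 2) + card added_tails * card added_heads"
    using n_subsets[OF heads(1), of 2] card_image_le[of "added_tails \<times> added_heads" "\<lambda>(t, s). {t, s}"]
      heads tails by (simp add: card_cartesian_product)
  also have "\<dots> \<le> (card (AN - AT) choose 2) + card (AN - AT) * card (AN - AT)"
    using heads tails by (intro add_mono binomial_right_mono mult_mono) auto
  finally show ?thesis .
qed

end

text \<open>\<open>c \<le> C(h,2) + h\<^sup>2 \<le> 3h\<^sup>2/2\<close> gives \<open>h \<ge> \<surd>(2c/3)\<close>.\<close>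
lemma sqrt_bound:
  fixes c h :: nat
  assumes "c \<le> (h choose 2) + h * h"
  shows "sqrt (2/3 * real c) \<le> real h"
proof -
  have "2 * (h choose 2) \<le> h * (h - 1)" unfolding choose_two by simp
  also have "\<dots> \<le> h * h" by simp
  finally have "2 * c \<le> 3 * (h * h)" using assms by linarith
  hence "2 * real c \<le> 3 * (real h * real h)" by (metis of_nat_le_iff of_nat_mult of_nat_numeral)
  hence "2/3 * real c \<le> (real h)\<^sup>2" by (simp add: power2_eq_square)
  hence "sqrt (2/3 * real c) \<le> sqrt ((real h)\<^sup>2)" by (rule real_sqrt_le_mono)
  thus ?thesis by simp
qed

context rooted_phylo_tree
begin

text \<open>Part (i) of the theorem: apply the counting bound to an optimal network.\<close>
lemma ell_lower:
  assumes "finite Gs"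
  shows "ereal (sqrt (2/3 * real (card {v \<in> V. nval V A X Gs G v > k}))) \<le> ereal_of_enat (ell X V A Gs G k)"
proof (cases "ell X V A Gs G k")
  case (enat h)
  then obtain VN AN F where net: "phylo_network (Inl ` X) VN AN"
    and obt: "obtained_by_adding X V A VN AN h" and lab: "gene_labelling X Gs G k VN AN F"
    by (rule ell_attained)
  obtain VT AT \<phi> P where sub: "VT \<subseteq> VN" "AT \<subseteq> AN" "subdivision V A VT AT \<phi> P"
    "\<forall>x\<in>X. \<phi> x = Inl x" "card (AN - AT) = h"
    using obt unfolding obtained_by_adding_def by blast
  have "finite AN" using net unfolding phylo_network_def digraph_def by (meson finite_SigmaI finite_subset)
  then interpret labelled_network X V A \<rho> VT AT \<phi> P VN AN F Gs G k
    using sub lab assms by unfold_locales (auto simp: gene_labelling_def subdivision_def)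
  have "sqrt (2/3 * real (card {v \<in> V. nval V A X Gs G v > k})) \<le> real h"
    using sqrt_bound card_bad_vertices sub(5) by metis
  then show ?thesis using enat by simp
qed simp

end

theorem theorem1:
  fixes X V :: "'a set" and A :: "('a \<times> 'a) set" and Gs :: "'g set"
    and G :: "'a \<Rightarrow> 'g set" and k :: nat
  assumes "phylo_tree X V A"
    and "finite Gs"
    and "\<forall>x\<in>X. G x \<subseteq> Gs"
    and "k > 0"
    and "\<forall>x\<in>X. card (G x) \<le> k"
  shows "ereal (sqrt (2/3 * real (card {v \<in> V. nval V A X Gs G v > k}))) \<le> ereal_of_enat (ell X V A Gs G k) \<and>
     ell X V A Gs G k \<le> enat (nat (\<lceil>(real (card Gs) - real k) / real k\<rceil> * (int (card X) + 1)))"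
proof -
  obtain \<rho> where "rooted_phylo_tree X V A \<rho>" using phylo_tree_rooted[OF assms(1)] .
  then interpret rooted_phylo_tree X V A \<rho> .
  show ?thesis using ell_lower[OF assms(2)] ell_upper[OF assms(2-5)] by blast
qed

end
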